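(* If $A,B\in\mathrm{Sym}_{>}(\mathbb C^{2d})$, then $A\#B$ is well defined and $A\#B\in\mathrm{Sym}_{>}(\mathbb C^{2d})$; thus $(\mathrm{Sym}_{>}(\mathbb C^{2d}),\#)$ is a semigroup. Moreover, if $A,B\in\mathrm{Sym}^{\rm qnd}_{>}(\mathbb C^{2d})$, then $A\#B\in\mathrm{Sym}^{\rm qnd}_{>}(\mathbb C^{2d})$, so $(\mathrm{Sym}^{\rm qnd}_{>}(\mathbb C^{2d}),\#)$ is also a semigroup.
   Context: Let $d\ge 1$, let $\mathbb 1$ denote an identity matrix, and let $\theta=\begin{bmatrix}0&-i\mathbb 1_d\\ i\mathbb 1_d&0\end{bmatrix}$ ($2d\times 2d$). $\mathrm{Sym}(\mathbb C^{n})$ denotes the set of complex symmetric $n\times n$ matrices; $\mathrm{Sym}_{>}(\mathbb C^{n})=\{A\in\mathrm{Sym}(\mathbb C^n):\ \Re A \text{ is positive definite}\}$ where $\Re A=(A+\bar A)/2$; $\mathrm{Sym}^{\rm qnd}_{>}(\mathbb C^{2d})=\{A\in\mathrm{Sym}_{>}(\mathbb C^{2d}):\det(\mathbb 1+A\theta)\ne0\}$. For $A,B\in\mathrm{Sym}(\mathbb C^{2d})$ such that $M=\begin{bmatrix}\theta A\theta&-\theta\\ \theta&\theta B\theta\end{bmatrix}$ is invertible, $A\#B:=J^TM^{-1}J$ with $J=\begin{bmatrix}-\mathbb 1_{2d}\\ \mathbb 1_{2d}\end{bmatrix}$; $A\#B$ is well defined iff $M$ is invertible. *)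

theory Defs
  imports Complex_Main "Jordan_Normal_Form.Matrix" "Jordan_Normal_Form.Determinant"
begin

definition theta_mat :: "nat \<Rightarrow> complex mat" where
  "theta_mat d = four_block_mat (0\<^sub>m d d) ((- \<i>) \<cdot>\<^sub>m 1\<^sub>m d) (\<i> \<cdot>\<^sub>m 1\<^sub>m d) (0\<^sub>m d d)"

definition sym_mat :: "nat \<Rightarrow> complex mat \<Rightarrow> bool" where
  "sym_mat n A \<longleftrightarrow> A \<in> carrier_mat n n \<and> transpose_mat A = A"

definition re_mat :: "complex mat \<Rightarrow> real mat" where
  "re_mat A = map_mat Re A"

definition pos_def_real :: "nat \<Rightarrow> real mat \<Rightarrow> bool" where
  "pos_def_real n R \<longleftrightarrow> R \<in> carrier_mat n n \<and>
     (\<forall>v \<in> carrier_vec n. v \<noteq> 0\<^sub>v n \<longrightarrow> v \<bullet> (R *\<^sub>v v) > 0)"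

definition Sym_pos :: "nat \<Rightarrow> complex mat set" where
  "Sym_pos n = {A. sym_mat n A \<and> pos_def_real n (re_mat A)}"

definition Sym_qnd :: "nat \<Rightarrow> complex mat set" where
  "Sym_qnd d = {A \<in> Sym_pos (2*d). det (1\<^sub>m (2*d) + A * theta_mat d) \<noteq> 0}"

definition M_mat :: "nat \<Rightarrow> complex mat \<Rightarrow> complex mat \<Rightarrow> complex mat" where
  "M_mat d A B = four_block_mat (theta_mat d * A * theta_mat d) (- theta_mat d)
                                (theta_mat d) (theta_mat d * B * theta_mat d)"

definition J_mat :: "nat \<Rightarrow> complex mat" where
  "J_mat d = (- 1\<^sub>m (2*d)) @\<^sub>r (1\<^sub>m (2*d))"

definition sharp_well_defined :: "nat \<Rightarrow> complex mat \<Rightarrow> complex mat \<Rightarrow> bool" where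
  "sharp_well_defined d A B \<longleftrightarrow> invertible_mat (M_mat d A B)"

definition inv_mat :: "complex mat \<Rightarrow> complex mat" where
  "inv_mat N = (SOME N'. inverts_mat N N' \<and> inverts_mat N' N)"

definition sharp :: "nat \<Rightarrow> complex mat \<Rightarrow> complex mat \<Rightarrow> complex mat" where
  "sharp d A B = transpose_mat (J_mat d) * inv_mat (M_mat d A B) * J_mat d"

end

theory Submission
  imports Defs
begin

text \<open>Write \<open>T\<close> for \<open>\<theta>\<close>. Unfolding the blocks, \<open>M (p @ q) = J (T w)\<close> says exactly
  \<open>w = p + B T q = q - A T p\<close>, and then \<open>(A # B) (T w) = q - p\<close>. Pairing with \<open>T w\<close> and using
  that \<open>T\<close> is Hermitian gives the energy identity
  \<open>Re \<langle>(A # B) T w, T w\<rangle> = Re \<langle>A T p, T p\<rangle> + Re \<langle>B T q, T q\<rangle>\<close>,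
  so \<open>M\<close> is injective and \<open>Re (A # B)\<close> is positive definite; symmetry of \<open>A # B\<close> follows from the
  skew-symmetry of \<open>T\<close>. Moreover the same equations say that the graph \<open>{(v + P v, v - P v)}\<close> of the
  Cayley transform of \<open>P = (A # B) T\<close> is the relational composite of those of \<open>B T\<close> and \<open>A T\<close>.
  Composition of relations is associative and the graph determines \<open>P\<close>, which gives associativity;
  and \<open>det (1 + P) \<noteq> 0\<close> says that the graph meets \<open>{0} \<times> _\<close> only in \<open>(0, 0)\<close>, a property
  preserved by composition.\<close>

lemma append_vec_cases:
  assumes "x \<in> carrier_vec (n + m)"
  obtains x1 x2 where "x1 \<in> carrier_vec n" "x2 \<in> carrier_vec m" "x = x1 @\<^sub>v x2"
  using assms by (metis vec_first_carrier vec_last_carrier vec_first_last_append)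

lemma add_diff_eq_vec_cancel:
  fixes x y u v :: "'a :: field_char_0 vec"
  assumes "x \<in> carrier_vec k" "y \<in> carrier_vec k" "u \<in> carrier_vec k" "v \<in> carrier_vec k"
    and sum: "x + y = u + v" and diff: "x - y = u - v"
  shows "x = u" "y = v"
proof -
  have "x $ i = u $ i \<and> y $ i = v $ i" if "i < k" for i
  proof -
    have sum_i: "x $ i + y $ i = u $ i + v $ i" and diff_i: "x $ i - y $ i = u $ i - v $ i"
      using arg_cong[OF sum, of "\<lambda>w. w $ i"] arg_cong[OF diff, of "\<lambda>w. w $ i"] that assms(1-4)
      by auto
    from diff_i have "x $ i = u $ i - v $ i + y $ i" by (simp add: algebra_simps)
    with sum_i have "y $ i + y $ i = v $ i + v $ i" by (simp add: algebra_simps)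
    then have "y $ i = v $ i" by (simp flip: mult_2)
    with sum_i show ?thesis by simp
  qed
  then show "x = u" "y = v" using assms(1-4) by (auto intro!: eq_vecI)
qed

lemma mult_mat_vec_zero [simp]:
  "dim_col (A :: 'a :: semiring_0 mat) = l \<Longrightarrow> A *\<^sub>v 0\<^sub>v l = 0\<^sub>v (dim_row A)"
  by (intro eq_vecI) auto

lemma mult_mat_vec_uminus:
  "(A :: 'a :: ring mat) \<in> carrier_mat k l \<Longrightarrow> v \<in> carrier_vec l \<Longrightarrow> A *\<^sub>v (- v) = - (A *\<^sub>v v)"
  by (intro eq_vecI) auto

lemma eq_mat_if_mult_vec_eq:
  assumes "(P :: 'a :: semiring_1 mat) \<in> carrier_mat k l" "Q \<in> carrier_mat k l"
    and "\<And>v. v \<in> carrier_vec l \<Longrightarrow> P *\<^sub>v v = Q *\<^sub>v v"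
  shows "P = Q"
proof (rule eq_matI)
  fix i j assume "i < dim_row Q" "j < dim_col Q"
  moreover have "(P *\<^sub>v unit_vec l j) $ i = (Q *\<^sub>v unit_vec l j) $ i"
    using assms(3)[of "unit_vec l j"] by simp
  ultimately show "P $$ (i, j) = Q $$ (i, j)" using assms(1,2) by simp
qed (use assms in auto)

lemma sym_mat_scalar_prod_swap:
  assumes "sym_mat k S" "u \<in> carrier_vec k" "v \<in> carrier_vec k"
  shows "(S *\<^sub>v u) \<bullet> v = (S *\<^sub>v v) \<bullet> u"
proof -
  have S: "S \<in> carrier_mat k k" "transpose_mat S = S" using assms(1) unfolding sym_mat_def by auto
  have "(S *\<^sub>v u) \<bullet> v = v \<bullet> (S *\<^sub>v u)" using S assms by (intro comm_scalar_prod[of _ k]) auto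
  also have "\<dots> = (transpose_mat S *\<^sub>v v) \<bullet> u" using transpose_vec_mult_scalar[OF S(1) assms(2,3)] by simp
  finally show ?thesis using S by simp
qed

lemma invertible_mat_if_det_nonzero:
  assumes "(N :: 'a :: field mat) \<in> carrier_mat k k" "det N \<noteq> 0"
  shows "invertible_mat N"
proof -
  obtain N' where "N' \<in> carrier_mat k k" "N' * N = 1\<^sub>m k" "N * N' = 1\<^sub>m k"
    using det_non_zero_imp_unit[OF assms, of "()"] unfolding Units_def ring_mat_def by auto
  then show ?thesis
    using assms(1) unfolding invertible_mat_def inverts_mat_def square_mat.simps by auto
qed

lemma inv_mat_inverse:
  assumes N: "N \<in> carrier_mat k k" and "invertible_mat N"
  shows "inv_mat N \<in> carrier_mat k k" "N * inv_mat N = 1\<^sub>m k" "inv_mat N * N = 1\<^sub>m k"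
proof -
  have "\<exists>N'. inverts_mat N N' \<and> inverts_mat N' N"
    using assms(2) unfolding invertible_mat_def by auto
  then have "inverts_mat N (inv_mat N) \<and> inverts_mat (inv_mat N) N"
    unfolding inv_mat_def by (rule someI_ex)
  then have right: "N * inv_mat N = 1\<^sub>m k" and left: "inv_mat N * N = 1\<^sub>m (dim_row (inv_mat N))"
    using N unfolding inverts_mat_def by auto
  have "dim_col (inv_mat N) = k" using arg_cong[OF right, of dim_col] by simp
  moreover have "dim_row (inv_mat N) = k" using arg_cong[OF left, of dim_col] N by simp
  ultimately show "inv_mat N \<in> carrier_mat k k" "N * inv_mat N = 1\<^sub>m k" "inv_mat N * N = 1\<^sub>m k"
    using right left by auto
qed

lemma cscalar_prod_eq_sum:
  "x \<in> carrier_vec k \<Longrightarrow> y \<in> carrier_vec k \<Longrightarrow> x \<bullet>c y = (\<Sum>i<k. x $ i * cnj (y $ i))"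
  unfolding scalar_prod_def by (auto intro!: sum.cong simp: atLeast0LessThan)

lemma cscalar_prod_add_right:
  "x \<in> carrier_vec k \<Longrightarrow> y \<in> carrier_vec k \<Longrightarrow> z \<in> carrier_vec k \<Longrightarrow>
    x \<bullet>c (y + z) = x \<bullet>c y + x \<bullet>c (z :: complex vec)"
  by (simp add: cscalar_prod_eq_sum sum.distrib algebra_simps)

lemma cscalar_prod_diff_right:
  "x \<in> carrier_vec k \<Longrightarrow> y \<in> carrier_vec k \<Longrightarrow> z \<in> carrier_vec k \<Longrightarrow>
    x \<bullet>c (y - z) = x \<bullet>c y - x \<bullet>c (z :: complex vec)"
  by (simp add: cscalar_prod_eq_sum sum_subtractf algebra_simps)

lemma Re_cscalar_prod_commute:
  "x \<in> carrier_vec k \<Longrightarrow> y \<in> carrier_vec k \<Longrightarrow> Re (x \<bullet>c y) = Re (y \<bullet>c (x :: complex vec))"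
  by (simp add: cscalar_prod_eq_sum Re_sum algebra_simps)

lemma mult_mat_vec_index_eq_sum:
  "A \<in> carrier_mat k l \<Longrightarrow> a \<in> carrier_vec l \<Longrightarrow> i < k \<Longrightarrow>
    (A *\<^sub>v a) $ i = (\<Sum>j<l. A $$ (i, j) * a $ j)"
  by (auto simp: scalar_prod_def atLeast0LessThan intro!: sum.cong)

lemma scalar_prod_mult_mat_vec_eq_sum:
  "(R :: 'a :: comm_semiring_0 mat) \<in> carrier_mat k k \<Longrightarrow> x \<in> carrier_vec k \<Longrightarrow>
    x \<bullet> (R *\<^sub>v x) = (\<Sum>i<k. \<Sum>j<k. R $$ (i, j) * x $ i * x $ j)"
  by (auto simp: scalar_prod_def atLeast0LessThan sum_distrib_left mult_ac intro!: sum.cong)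

text \<open>For symmetric \<open>A\<close> the imaginary part of \<open>A\<close> pairs \<open>Re a\<close> with \<open>Im a\<close> antisymmetrically,
  so it drops out of the real part of the quadratic form.\<close>
lemma Re_quadratic_form_sym_mat:
  assumes "sym_mat k A" and a: "a \<in> carrier_vec k"
  defines "x \<equiv> map_vec Re a" and "y \<equiv> map_vec Im a"
  shows "Re ((A *\<^sub>v a) \<bullet>c a) = x \<bullet> (re_mat A *\<^sub>v x) + y \<bullet> (re_mat A *\<^sub>v y)"
proof -
  have A: "A \<in> carrier_mat k k" and sym: "transpose_mat A = A"
    using assms(1) unfolding sym_mat_def by auto
  have symij: "A $$ (j, i) = A $$ (i, j)" if "i < k" "j < k" for i j
    using arg_cong[OF sym, of "\<lambda>M. M $$ (i, j)"] that A by auto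
  define R where "R = re_mat A"
  have xy: "x \<in> carrier_vec k" "y \<in> carrier_vec k" and R: "R \<in> carrier_mat k k"
    using a A unfolding x_def y_def R_def re_mat_def by auto
  let ?s = "\<lambda>i j. Im (A $$ (i, j)) * (x $ i * y $ j)"
  let ?t = "\<lambda>i j. Im (A $$ (i, j)) * (x $ j * y $ i)"
  have antisym: "(\<Sum>i<k. \<Sum>j<k. ?t i j) = (\<Sum>i<k. \<Sum>j<k. ?s i j)"
    by (subst sum.swap) (intro sum.cong refl, simp add: symij)
  have "(A *\<^sub>v a) \<bullet>c a = (\<Sum>i<k. \<Sum>j<k. A $$ (i, j) * a $ j * cnj (a $ i))"
    using A a
    by (subst cscalar_prod_eq_sum[of _ k])
      (auto simp: mult_mat_vec_index_eq_sum sum_distrib_right simp del: index_mult_mat_vec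
        intro!: sum.cong)
  then have "Re ((A *\<^sub>v a) \<bullet>c a) = (\<Sum>i<k. \<Sum>j<k. Re (A $$ (i, j) * a $ j * cnj (a $ i)))"
    by (simp add: Re_sum)
  also have "\<dots> = (\<Sum>i<k. \<Sum>j<k. R $$ (i, j) * x $ i * x $ j + R $$ (i, j) * y $ i * y $ j
      - (?s i j - ?t i j))"
    using a A xy by (intro sum.cong refl) (auto simp: R_def re_mat_def x_def y_def algebra_simps)
  also have "\<dots> = x \<bullet> (R *\<^sub>v x) + y \<bullet> (R *\<^sub>v y)"
    using R xy antisym by (simp add: scalar_prod_mult_mat_vec_eq_sum sum.distrib sum_subtractf)
  finally show ?thesis unfolding R_def .
qed

lemma Sym_pos_iff:
  "A \<in> Sym_pos k \<longleftrightarrow>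
    sym_mat k A \<and> (\<forall>a \<in> carrier_vec k. a \<noteq> 0\<^sub>v k \<longrightarrow> Re ((A *\<^sub>v a) \<bullet>c a) > 0)"
proof (intro iffI conjI ballI impI)
  assume "A \<in> Sym_pos k"
  then have sym: "sym_mat k A" and pd: "pos_def_real k (re_mat A)"
    unfolding Sym_pos_def by auto
  from sym show "sym_mat k A" .
  fix a :: "complex vec" assume a: "a \<in> carrier_vec k" "a \<noteq> 0\<^sub>v k"
  let ?x = "map_vec Re a" and ?y = "map_vec Im a"
  have nonneg: "v \<bullet> (re_mat A *\<^sub>v v) \<ge> 0" if "v \<in> carrier_vec k" for v
    using pd that unfolding pos_def_real_def
    by (cases "v = 0\<^sub>v k") (auto simp: less_imp_le)
  have "?x \<noteq> 0\<^sub>v k \<or> ?y \<noteq> 0\<^sub>v k"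
    using a by (auto simp: vec_eq_iff complex_eq_iff)
  then have "?x \<bullet> (re_mat A *\<^sub>v ?x) > 0 \<or> ?y \<bullet> (re_mat A *\<^sub>v ?y) > 0"
    using pd a unfolding pos_def_real_def by auto
  then show "Re ((A *\<^sub>v a) \<bullet>c a) > 0"
    unfolding Re_quadratic_form_sym_mat[OF sym a(1)] using nonneg a(1)
    by (meson add_pos_nonneg add_nonneg_pos map_carrier_vec)
next
  assume A: "sym_mat k A \<and> (\<forall>a \<in> carrier_vec k. a \<noteq> 0\<^sub>v k \<longrightarrow> Re ((A *\<^sub>v a) \<bullet>c a) > 0)"
  have "v \<bullet> (re_mat A *\<^sub>v v) > 0" if v: "v \<in> carrier_vec k" "v \<noteq> 0\<^sub>v k" for v
  proof -
    let ?a = "map_vec complex_of_real v"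
    have a: "?a \<in> carrier_vec k" "?a \<noteq> 0\<^sub>v k" using v by (auto simp: vec_eq_iff)
    have "re_mat A \<in> carrier_mat k k" using A unfolding sym_mat_def re_mat_def by auto
    moreover have "map_vec Re ?a = v" "map_vec Im ?a = 0\<^sub>v k" using v by auto
    ultimately have "Re ((A *\<^sub>v ?a) \<bullet>c ?a) = v \<bullet> (re_mat A *\<^sub>v v)"
      using A Re_quadratic_form_sym_mat[of k A ?a] a(1) by auto
    moreover have "Re ((A *\<^sub>v ?a) \<bullet>c ?a) > 0" using A a by blast
    ultimately show ?thesis by simp
  qed
  with A show "A \<in> Sym_pos k"
    unfolding Sym_pos_def pos_def_real_def sym_mat_def re_mat_def by auto
qed

lemma Sym_pos_Re_quadratic_form_nonneg:
  assumes "A \<in> Sym_pos k" "a \<in> carrier_vec k"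
  shows "Re ((A *\<^sub>v a) \<bullet>c a) \<ge> 0"
proof (cases "a = 0\<^sub>v k")
  case True
  have "A \<in> carrier_mat k k" using assms(1) unfolding Sym_pos_def sym_mat_def by auto
  with True show ?thesis by (simp add: cscalar_prod_eq_sum)
qed (use assms Sym_pos_iff in auto)

lemma theta_mat_carrier [simp]: "theta_mat d \<in> carrier_mat (2*d) (2*d)"
  unfolding theta_mat_def mult_2 by (rule four_block_carrier_mat) auto

lemma theta_mat_dims [simp]: "dim_row (theta_mat d) = 2*d" "dim_col (theta_mat d) = 2*d"
  using theta_mat_carrier[of d] unfolding carrier_mat_def by auto

lemma theta_mult_vec_carrier [simp]:
  "v \<in> carrier_vec (2*d) \<Longrightarrow> theta_mat d *\<^sub>v v \<in> carrier_vec (2*d)"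
  by (rule mult_mat_vec_carrier[OF theta_mat_carrier])

lemma theta_mult_append:
  assumes "x1 \<in> carrier_vec d" "x2 \<in> carrier_vec d"
  shows "theta_mat d *\<^sub>v (x1 @\<^sub>v x2) = ((- \<i>) \<cdot>\<^sub>v x2) @\<^sub>v (\<i> \<cdot>\<^sub>v x1)"
  unfolding theta_mat_def using assms
  by (subst four_block_mat_mult_vec[of _ d d _ d _ d]) auto

lemma theta_involution:
  assumes "x \<in> carrier_vec (2*d)"
  shows "theta_mat d *\<^sub>v (theta_mat d *\<^sub>v x) = x"
proof -
  obtain x1 x2 where "x1 \<in> carrier_vec d" "x2 \<in> carrier_vec d" "x = x1 @\<^sub>v x2"
    using assms unfolding mult_2 by (rule append_vec_cases)
  then show ?thesis by (simp add: theta_mult_append smult_smult_assoc)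
qed

lemma theta_mult_vec_inject:
  assumes "x \<in> carrier_vec (2*d)" "y \<in> carrier_vec (2*d)"
  shows "theta_mat d *\<^sub>v x = theta_mat d *\<^sub>v y \<longleftrightarrow> x = y"
  using assms by (metis theta_involution)

lemma theta_skew:
  assumes "x \<in> carrier_vec (2*d)" "y \<in> carrier_vec (2*d)"
  shows "(theta_mat d *\<^sub>v x) \<bullet> y = - (x \<bullet> (theta_mat d *\<^sub>v y))"
proof -
  obtain x1 x2 where x: "x1 \<in> carrier_vec d" "x2 \<in> carrier_vec d" "x = x1 @\<^sub>v x2"
    using assms(1) unfolding mult_2 by (rule append_vec_cases)
  obtain y1 y2 where y: "y1 \<in> carrier_vec d" "y2 \<in> carrier_vec d" "y = y1 @\<^sub>v y2"
    using assms(2) unfolding mult_2 by (rule append_vec_cases)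
  show ?thesis using x y
    by (simp add: theta_mult_append scalar_prod_append[of _ d _ d] comm_scalar_prod[of _ d]
        algebra_simps)
qed

lemma theta_hermitian:
  assumes "x \<in> carrier_vec (2*d)" "y \<in> carrier_vec (2*d)"
  shows "(theta_mat d *\<^sub>v x) \<bullet>c y = x \<bullet>c (theta_mat d *\<^sub>v y)"
proof -
  obtain x1 x2 where x: "x1 \<in> carrier_vec d" "x2 \<in> carrier_vec d" "x = x1 @\<^sub>v x2"
    using assms(1) unfolding mult_2 by (rule append_vec_cases)
  obtain y1 y2 where y: "y1 \<in> carrier_vec d" "y2 \<in> carrier_vec d" "y = y1 @\<^sub>v y2"
    using assms(2) unfolding mult_2 by (rule append_vec_cases)
  have conj_append: "conjugate (a @\<^sub>v b) = conjugate a @\<^sub>v conjugate b" for a b :: "complex vec"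
    by (rule eq_vecI) auto
  show ?thesis using x y
    by (simp add: theta_mult_append conj_append conjugate_smult_vec scalar_prod_append[of _ d _ d]
        comm_scalar_prod[of _ d] algebra_simps)
qed

lemma theta_cancel_right:
  assumes P: "P \<in> carrier_mat (2*d) (2*d)" and Q: "Q \<in> carrier_mat (2*d) (2*d)"
    and "P * theta_mat d = Q * theta_mat d"
  shows "P = Q"
proof (rule eq_mat_if_mult_vec_eq[OF P Q])
  fix v :: "complex vec" assume v: "v \<in> carrier_vec (2*d)"
  have "P *\<^sub>v v = (P * theta_mat d) *\<^sub>v (theta_mat d *\<^sub>v v)" if "P \<in> carrier_mat (2*d) (2*d)" for P
    using assoc_mult_mat_vec[OF that theta_mat_carrier theta_mult_vec_carrier[OF v]] v
    by (simp add: theta_involution)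
  with P Q assms(3) show "P *\<^sub>v v = Q *\<^sub>v v" by metis
qed

lemma J_mat_carrier: "J_mat d \<in> carrier_mat (2*d + 2*d) (2*d)"
  unfolding J_mat_def by (rule carrier_append_rows) auto

lemma J_mult_vec:
  assumes "z \<in> carrier_vec (2*d)"
  shows "J_mat d *\<^sub>v z = (- z) @\<^sub>v z"
  unfolding J_mat_def using assms by (subst mat_mult_append[of _ "2*d" "2*d"]) auto

lemma transpose_J_mult_append:
  assumes "p \<in> carrier_vec (2*d)" "q \<in> carrier_vec (2*d)"
  shows "transpose_mat (J_mat d) *\<^sub>v (p @\<^sub>v q) = q - p"
proof -
  have "transpose_mat (J_mat d) =
      four_block_mat (- 1\<^sub>m (2*d)) (1\<^sub>m (2*d)) (0\<^sub>m 0 (2*d)) (0\<^sub>m 0 (2*d))"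
    unfolding J_mat_def append_rows_def
    by (subst transpose_four_block_mat[of _ "2*d" "2*d" _ 0 _ "2*d"]) (auto simp: transpose_uminus)
  with assms show ?thesis
    by (simp, subst four_block_mat_mult_vec[of _ "2*d" "2*d" _ "2*d" _ 0]) auto
qed

text \<open>The graph of the Cayley transform \<open>(1 - P)(1 + P)\<^sup>-\<^sup>1\<close>, written without inverting
  \<open>1 + P\<close>.\<close>
definition cayley_rel :: "nat \<Rightarrow> complex mat \<Rightarrow> (complex vec \<times> complex vec) set" where
  "cayley_rel k P = {(v + P *\<^sub>v v, v - P *\<^sub>v v) | v. v \<in> carrier_vec k}"

lemma cayley_rel_inject:
  assumes P: "P \<in> carrier_mat k k" and Q: "Q \<in> carrier_mat k k"
    and eq: "cayley_rel k P = cayley_rel k Q"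
  shows "P = Q"
proof (rule eq_mat_if_mult_vec_eq[OF P Q])
  fix v :: "complex vec" assume v: "v \<in> carrier_vec k"
  have "(v + P *\<^sub>v v, v - P *\<^sub>v v) \<in> cayley_rel k Q"
    using v eq unfolding cayley_rel_def by blast
  then obtain u where u: "u \<in> carrier_vec k" "v + P *\<^sub>v v = u + Q *\<^sub>v u" "v - P *\<^sub>v v = u - Q *\<^sub>v u"
    unfolding cayley_rel_def by auto
  then have "v = u" "P *\<^sub>v v = Q *\<^sub>v u"
    using add_diff_eq_vec_cancel[of v k "P *\<^sub>v v" u "Q *\<^sub>v u"] v P Q by auto
  then show "P *\<^sub>v v = Q *\<^sub>v v" by simp
qed

lemma det_one_plus_nonzero_iff:
  assumes P: "P \<in> carrier_mat k k"
  shows "det (1\<^sub>m k + P) \<noteq> 0 \<longleftrightarrow> (\<forall>y. (0\<^sub>v k, y) \<in> cayley_rel k P \<longrightarrow> y = 0\<^sub>v k)"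
proof -
  have one_plus: "(1\<^sub>m k + P) *\<^sub>v v = v + P *\<^sub>v v" if "v \<in> carrier_vec k" for v
    using that P by (simp add: add_mult_distrib_mat_vec[of _ k k])
  have kernel: "det (1\<^sub>m k + P) = 0 \<longleftrightarrow> (\<exists>v \<in> carrier_vec k. v \<noteq> 0\<^sub>v k \<and> v + P *\<^sub>v v = 0\<^sub>v k)"
    using det_0_iff_vec_prod_zero[of "1\<^sub>m k + P" k] P one_plus by auto
  show ?thesis
  proof
    assume "det (1\<^sub>m k + P) \<noteq> 0"
    then show "\<forall>y. (0\<^sub>v k, y) \<in> cayley_rel k P \<longrightarrow> y = 0\<^sub>v k"
      using kernel P unfolding cayley_rel_def by fastforce
  next
    assume inj: "\<forall>y. (0\<^sub>v k, y) \<in> cayley_rel k P \<longrightarrow> y = 0\<^sub>v k"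
    have "v = 0\<^sub>v k" if v: "v \<in> carrier_vec k" "v + P *\<^sub>v v = 0\<^sub>v k" for v
    proof -
      have "(0\<^sub>v k, v - P *\<^sub>v v) \<in> cayley_rel k P"
        using v unfolding cayley_rel_def by (metis (mono_tags, lifting) mem_Collect_eq)
      with inj have "v - P *\<^sub>v v = 0\<^sub>v k" by blast
      then show "v = 0\<^sub>v k"
        using add_diff_eq_vec_cancel(1)[of v k "P *\<^sub>v v" "0\<^sub>v k" "0\<^sub>v k"] v P by simp
    qed
    with kernel show "det (1\<^sub>m k + P) \<noteq> 0" by blast
  qed
qed

locale sharp_pair =
  fixes d :: nat and A B :: "complex mat"
  assumes A_carrier: "A \<in> carrier_mat (2*d) (2*d)" and B_carrier: "B \<in> carrier_mat (2*d) (2*d)"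
begin

abbreviation "n \<equiv> 2*d"
abbreviation "T \<equiv> theta_mat d"

lemma mult_vec_carrier [simp]:
  "v \<in> carrier_vec n \<Longrightarrow> A *\<^sub>v v \<in> carrier_vec n"
  "v \<in> carrier_vec n \<Longrightarrow> B *\<^sub>v v \<in> carrier_vec n"
  using A_carrier B_carrier by (auto intro: mult_mat_vec_carrier)

lemma mult_theta_mult_vec [simp]:
  assumes "v \<in> carrier_vec n"
  shows "(A * T) *\<^sub>v v = A *\<^sub>v (T *\<^sub>v v)" "(B * T) *\<^sub>v v = B *\<^sub>v (T *\<^sub>v v)"
  using assoc_mult_mat_vec[OF A_carrier theta_mat_carrier assms]
    assoc_mult_mat_vec[OF B_carrier theta_mat_carrier assms] by auto

lemma theta_sandwich_carrier [simp]: "T * A * T \<in> carrier_mat n n" "T * B * T \<in> carrier_mat n n"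
  using A_carrier B_carrier by (meson mult_carrier_mat theta_mat_carrier)+

lemma theta_sandwich_mult_vec [simp]:
  assumes "v \<in> carrier_vec n"
  shows "(T * A * T) *\<^sub>v v = T *\<^sub>v (A *\<^sub>v (T *\<^sub>v v))" "(T * B * T) *\<^sub>v v = T *\<^sub>v (B *\<^sub>v (T *\<^sub>v v))"
proof -
  have TA: "T * A \<in> carrier_mat n n" and TB: "T * B \<in> carrier_mat n n"
    using A_carrier B_carrier by (meson mult_carrier_mat theta_mat_carrier)+
  show "(T * A * T) *\<^sub>v v = T *\<^sub>v (A *\<^sub>v (T *\<^sub>v v))"
    using assoc_mult_mat_vec[OF TA theta_mat_carrier assms]
      assoc_mult_mat_vec[OF theta_mat_carrier A_carrier theta_mult_vec_carrier[OF assms]] by simp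
  show "(T * B * T) *\<^sub>v v = T *\<^sub>v (B *\<^sub>v (T *\<^sub>v v))"
    using assoc_mult_mat_vec[OF TB theta_mat_carrier assms]
      assoc_mult_mat_vec[OF theta_mat_carrier B_carrier theta_mult_vec_carrier[OF assms]] by simp
qed

lemma M_carrier: "M_mat d A B \<in> carrier_mat (n + n) (n + n)"
  unfolding M_mat_def by (intro four_block_carrier_mat) auto

text \<open>By \<open>M_mult_append_eq_J_iff\<close> this says \<open>M (p @ q) = J (T w)\<close>, so that
  \<open>(A # B) (T w) = q - p\<close>.\<close>
definition sharp_solution :: "complex vec \<Rightarrow> complex vec \<Rightarrow> complex vec \<Rightarrow> bool" where
  "sharp_solution w p q \<longleftrightarrow> p \<in> carrier_vec n \<and> q \<in> carrier_vec n \<and>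
     w = p + (B * T) *\<^sub>v q \<and> w = q - (A * T) *\<^sub>v p"

lemma M_mult_append_eq_J_iff:
  assumes p: "p \<in> carrier_vec n" and q: "q \<in> carrier_vec n" and w: "w \<in> carrier_vec n"
  shows "M_mat d A B *\<^sub>v (p @\<^sub>v q) = J_mat d *\<^sub>v (T *\<^sub>v w) \<longleftrightarrow> sharp_solution w p q"
proof -
  define a where "a = (A * T) *\<^sub>v p"
  define b where "b = (B * T) *\<^sub>v q"
  have ab: "a \<in> carrier_vec n" "b \<in> carrier_vec n"
    unfolding a_def b_def using p q A_carrier B_carrier by auto
  have "M_mat d A B *\<^sub>v (p @\<^sub>v q) = ((T * A * T) *\<^sub>v p + (- T) *\<^sub>v q) @\<^sub>v (T *\<^sub>v p + (T * B * T) *\<^sub>v q)"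
    unfolding M_mat_def using p q by (subst four_block_mat_mult_vec[of _ n n _ n _ n]) auto
  also have "\<dots> = (T *\<^sub>v (a - q)) @\<^sub>v (T *\<^sub>v (p + b))"
    using p q ab carrier_vecD[OF q]
    by (simp add: a_def b_def mult_minus_distrib_mat_vec[OF theta_mat_carrier]
        mult_add_distrib_mat_vec[OF theta_mat_carrier] mult_mat_vec_uminus[OF theta_mat_carrier]
        minus_add_uminus_vec[of _ n])
  finally have "M_mat d A B *\<^sub>v (p @\<^sub>v q) = (T *\<^sub>v (a - q)) @\<^sub>v (T *\<^sub>v (p + b))" .
  moreover have "J_mat d *\<^sub>v (T *\<^sub>v w) = (T *\<^sub>v (- w)) @\<^sub>v (T *\<^sub>v w)"
    using w by (simp add: J_mult_vec mult_mat_vec_uminus[OF theta_mat_carrier])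
  ultimately have "M_mat d A B *\<^sub>v (p @\<^sub>v q) = J_mat d *\<^sub>v (T *\<^sub>v w) \<longleftrightarrow> a - q = - w \<and> p + b = w"
    using p q w ab by (simp add: append_vec_eq[of _ n] theta_mult_vec_inject)
  also have "\<dots> \<longleftrightarrow> sharp_solution w p q"
    unfolding sharp_solution_def a_def[symmetric] b_def[symmetric] using p q w ab
    by (auto simp: vec_eq_iff algebra_simps)
  finally show ?thesis .
qed

lemma sharp_solution_energy:
  assumes "sharp_solution w p q"
  shows "Re ((q - p) \<bullet>c (T *\<^sub>v w)) =
    Re ((A *\<^sub>v (T *\<^sub>v p)) \<bullet>c (T *\<^sub>v p)) + Re ((B *\<^sub>v (T *\<^sub>v q)) \<bullet>c (T *\<^sub>v q))"
proof -
  let ?a = "A *\<^sub>v (T *\<^sub>v p)" and ?b = "B *\<^sub>v (T *\<^sub>v q)"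
  have p: "p \<in> carrier_vec n" and q: "q \<in> carrier_vec n"
    and w_p: "w = p + ?b" and w_q: "w = q - ?a"
    using assms mult_theta_mult_vec unfolding sharp_solution_def by auto
  have c: "T *\<^sub>v p \<in> carrier_vec n" "T *\<^sub>v q \<in> carrier_vec n" "?a \<in> carrier_vec n" "?b \<in> carrier_vec n"
    using p q A_carrier B_carrier by auto
  have "(q - p) \<bullet>c (T *\<^sub>v w) = q \<bullet>c (T *\<^sub>v w) - p \<bullet>c (T *\<^sub>v w)"
    using p q w_p c by (intro minus_scalar_prod_distrib[of _ n]) auto
  also have "\<dots> = (T *\<^sub>v q) \<bullet>c w - (T *\<^sub>v p) \<bullet>c w"
    using p q w_p c by (simp add: theta_hermitian)
  also have "(T *\<^sub>v q) \<bullet>c w = (T *\<^sub>v q) \<bullet>c p + (T *\<^sub>v q) \<bullet>c ?b"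
    using p c by (subst w_p) (simp add: cscalar_prod_add_right[of _ n])
  also have "(T *\<^sub>v p) \<bullet>c w = (T *\<^sub>v p) \<bullet>c q - (T *\<^sub>v p) \<bullet>c ?a"
    using q c by (subst w_q) (simp add: cscalar_prod_diff_right[of _ n])
  finally have expand: "(q - p) \<bullet>c (T *\<^sub>v w) =
    (T *\<^sub>v q) \<bullet>c p + (T *\<^sub>v q) \<bullet>c ?b - ((T *\<^sub>v p) \<bullet>c q - (T *\<^sub>v p) \<bullet>c ?a)" .
  have "Re ((T *\<^sub>v q) \<bullet>c p) = Re (q \<bullet>c (T *\<^sub>v p))"
    using p q by (simp add: theta_hermitian)
  also have "\<dots> = Re ((T *\<^sub>v p) \<bullet>c q)"
    using p q c by (intro Re_cscalar_prod_commute) auto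
  finally have "Re ((T *\<^sub>v q) \<bullet>c p) = Re ((T *\<^sub>v p) \<bullet>c q)" .
  moreover have "Re ((T *\<^sub>v q) \<bullet>c ?b) = Re (?b \<bullet>c (T *\<^sub>v q))"
    and "Re ((T *\<^sub>v p) \<bullet>c ?a) = Re (?a \<bullet>c (T *\<^sub>v p))"
    using c by (auto intro: Re_cscalar_prod_commute)
  ultimately show ?thesis unfolding expand by simp
qed

end

locale sharp_pos_pair = sharp_pair +
  assumes A_pos: "A \<in> Sym_pos (2*d)" and B_pos: "B \<in> Sym_pos (2*d)"
begin

lemma sharp_solution_energy_pos:
  assumes "sharp_solution w p q" and "p \<noteq> 0\<^sub>v n \<or> q \<noteq> 0\<^sub>v n"
  shows "Re ((q - p) \<bullet>c (T *\<^sub>v w)) > 0"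
proof -
  have p: "p \<in> carrier_vec n" and q: "q \<in> carrier_vec n"
    using assms(1) unfolding sharp_solution_def by auto
  have c: "T *\<^sub>v p \<in> carrier_vec n" "T *\<^sub>v q \<in> carrier_vec n" using p q by auto
  have "T *\<^sub>v p \<noteq> 0\<^sub>v n \<or> T *\<^sub>v q \<noteq> 0\<^sub>v n"
    using assms(2) p q theta_mult_vec_inject[of _ d "0\<^sub>v n"] by auto
  then show ?thesis
    unfolding sharp_solution_energy[OF assms(1)]
    using A_pos B_pos c Sym_pos_iff[of A n] Sym_pos_iff[of B n]
      Sym_pos_Re_quadratic_form_nonneg[OF A_pos c(1)] Sym_pos_Re_quadratic_form_nonneg[OF B_pos c(2)]
    by (meson add_pos_nonneg add_nonneg_pos)
qed

lemma M_invertible: "invertible_mat (M_mat d A B)"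
proof (rule invertible_mat_if_det_nonzero[OF M_carrier], rule notI)
  assume "det (M_mat d A B) = 0"
  then obtain v where v: "v \<in> carrier_vec (n + n)" "v \<noteq> 0\<^sub>v (n + n)" "M_mat d A B *\<^sub>v v = 0\<^sub>v (n + n)"
    using det_0_iff_vec_prod_zero[OF M_carrier] by blast
  obtain p q where pq: "p \<in> carrier_vec n" "q \<in> carrier_vec n" "v = p @\<^sub>v q"
    using v(1) by (rule append_vec_cases)
  have "J_mat d *\<^sub>v (T *\<^sub>v 0\<^sub>v n) = 0\<^sub>v (n + n)"
    by (rule eq_vecI) (auto simp: J_mult_vec)
  with v pq have "sharp_solution (0\<^sub>v n) p q"
    using M_mult_append_eq_J_iff[of p q "0\<^sub>v n"] by simp
  moreover have "Re ((q - p) \<bullet>c (T *\<^sub>v 0\<^sub>v n)) = 0"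
    using pq by (simp add: cscalar_prod_eq_sum)
  ultimately have "p = 0\<^sub>v n \<and> q = 0\<^sub>v n"
    using sharp_solution_energy_pos by fastforce
  with v pq show False by auto
qed

lemma sharp_carrier: "sharp d A B \<in> carrier_mat n n"
  unfolding sharp_def using J_mat_carrier inv_mat_inverse(1)[OF M_carrier M_invertible]
  by (meson mult_carrier_mat transpose_carrier_mat)

lemma sharp_mult_vec:
  assumes "sharp_solution w p q"
  shows "sharp d A B *\<^sub>v (T *\<^sub>v w) = q - p"
proof -
  let ?M = "M_mat d A B" and ?N = "inv_mat (M_mat d A B)" and ?J = "J_mat d"
  note N = inv_mat_inverse[OF M_carrier M_invertible]
  have p: "p \<in> carrier_vec n" and q: "q \<in> carrier_vec n" and w: "w \<in> carrier_vec n"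
    using assms A_carrier B_carrier unfolding sharp_solution_def by auto
  have pq: "p @\<^sub>v q \<in> carrier_vec (n + n)" using p q by (rule append_carrier_vec)
  have Jz_eq: "?J *\<^sub>v (T *\<^sub>v w) = ?M *\<^sub>v (p @\<^sub>v q)"
    using M_mult_append_eq_J_iff[OF p q w] assms by simp
  have JT: "transpose_mat ?J \<in> carrier_mat n (n + n)" using J_mat_carrier by auto
  have Jz: "?J *\<^sub>v (T *\<^sub>v w) \<in> carrier_vec (n + n)"
    using J_mat_carrier w by (rule mult_mat_vec_carrier[OF _ theta_mult_vec_carrier])
  have "sharp d A B *\<^sub>v (T *\<^sub>v w) = (transpose_mat ?J * ?N) *\<^sub>v (?J *\<^sub>v (T *\<^sub>v w))"
    unfolding sharp_def using JT N(1) J_mat_carrier theta_mult_vec_carrier[OF w]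
    by (intro assoc_mult_mat_vec) auto
  also have "\<dots> = transpose_mat ?J *\<^sub>v (?N *\<^sub>v (?M *\<^sub>v (p @\<^sub>v q)))"
    unfolding Jz_eq[symmetric] using JT N(1) Jz by (rule assoc_mult_mat_vec)
  also have "\<dots> = transpose_mat ?J *\<^sub>v (p @\<^sub>v q)"
    using N M_carrier pq by (simp flip: assoc_mult_mat_vec)
  also have "\<dots> = q - p" using p q by (rule transpose_J_mult_append)
  finally show ?thesis .
qed

lemma sharp_solution_exists:
  assumes w: "w \<in> carrier_vec n"
  obtains p q where "sharp_solution w p q"
proof -
  let ?M = "M_mat d A B" and ?N = "inv_mat (M_mat d A B)"
  note N = inv_mat_inverse[OF M_carrier M_invertible]
  have Jz: "J_mat d *\<^sub>v (T *\<^sub>v w) \<in> carrier_vec (n + n)"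
    using J_mat_carrier w by (rule mult_mat_vec_carrier[OF _ theta_mult_vec_carrier])
  obtain p q where pq: "p \<in> carrier_vec n" "q \<in> carrier_vec n" "?N *\<^sub>v (J_mat d *\<^sub>v (T *\<^sub>v w)) = p @\<^sub>v q"
    using mult_mat_vec_carrier[OF N(1) Jz] by (rule append_vec_cases) auto
  have "?M *\<^sub>v (p @\<^sub>v q) = (?M * ?N) *\<^sub>v (J_mat d *\<^sub>v (T *\<^sub>v w))"
    unfolding pq(3)[symmetric] using N(1) M_carrier Jz by simp
  also have "\<dots> = J_mat d *\<^sub>v (T *\<^sub>v w)" using N(2) Jz by simp
  finally show ?thesis using M_mult_append_eq_J_iff[OF pq(1,2) w] that by blast
qed

lemma sharp_scalar_prod_expand:
  assumes "sharp_solution w p q" "sharp_solution w' p' q'"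
  shows "(T *\<^sub>v w') \<bullet> (sharp d A B *\<^sub>v (T *\<^sub>v w)) =
    q' \<bullet> (T *\<^sub>v p) - p' \<bullet> (T *\<^sub>v q) - (A *\<^sub>v (T *\<^sub>v p')) \<bullet> (T *\<^sub>v p) - (B *\<^sub>v (T *\<^sub>v q')) \<bullet> (T *\<^sub>v q)"
proof -
  have c: "p \<in> carrier_vec n" "q \<in> carrier_vec n" "p' \<in> carrier_vec n" "q' \<in> carrier_vec n"
    and w'_p: "w' = p' + B *\<^sub>v (T *\<^sub>v q')" and w'_q: "w' = q' - A *\<^sub>v (T *\<^sub>v p')"
    using assms mult_theta_mult_vec unfolding sharp_solution_def by auto
  have c': "A *\<^sub>v (T *\<^sub>v p') \<in> carrier_vec n" "B *\<^sub>v (T *\<^sub>v q') \<in> carrier_vec n"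
    "T *\<^sub>v p \<in> carrier_vec n" "T *\<^sub>v q \<in> carrier_vec n" "w' \<in> carrier_vec n"
    using c A_carrier B_carrier w'_p by auto
  have "(T *\<^sub>v w') \<bullet> (sharp d A B *\<^sub>v (T *\<^sub>v w)) = - (w' \<bullet> (T *\<^sub>v q)) + w' \<bullet> (T *\<^sub>v p)"
    using c c' by (simp add: sharp_mult_vec[OF assms(1)] theta_skew mult_minus_distrib_mat_vec
        scalar_prod_minus_distrib[of _ n])
  also have "w' \<bullet> (T *\<^sub>v q) = p' \<bullet> (T *\<^sub>v q) + (B *\<^sub>v (T *\<^sub>v q')) \<bullet> (T *\<^sub>v q)"
    using c c' by (subst w'_p) (simp add: add_scalar_prod_distrib[of _ n])
  also have "w' \<bullet> (T *\<^sub>v p) = q' \<bullet> (T *\<^sub>v p) - (A *\<^sub>v (T *\<^sub>v p')) \<bullet> (T *\<^sub>v p)"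
    using c c' by (subst w'_q) (simp add: minus_scalar_prod_distrib[of _ n])
  finally show ?thesis by simp
qed

lemma sharp_sym_mat: "sym_mat n (sharp d A B)"
proof -
  let ?C = "sharp d A B"
  have swap: "y \<bullet> (?C *\<^sub>v x) = x \<bullet> (?C *\<^sub>v y)" if x: "x \<in> carrier_vec n" and y: "y \<in> carrier_vec n" for x y
  proof -
    obtain p q where s: "sharp_solution (T *\<^sub>v x) p q"
      by (rule sharp_solution_exists[OF theta_mult_vec_carrier[OF x]])
    obtain p' q' where s': "sharp_solution (T *\<^sub>v y) p' q'"
      by (rule sharp_solution_exists[OF theta_mult_vec_carrier[OF y]])
    have c: "p \<in> carrier_vec n" "q \<in> carrier_vec n" "p' \<in> carrier_vec n" "q' \<in> carrier_vec n"
      using s s' unfolding sharp_solution_def by auto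
    have skew: "u \<bullet> (T *\<^sub>v v) = - (v \<bullet> (T *\<^sub>v u))" if "u \<in> carrier_vec n" "v \<in> carrier_vec n" for u v
      using that theta_skew[of v d u] comm_scalar_prod[of u n "T *\<^sub>v v"] by simp
    have "(A *\<^sub>v (T *\<^sub>v p')) \<bullet> (T *\<^sub>v p) = (A *\<^sub>v (T *\<^sub>v p)) \<bullet> (T *\<^sub>v p')"
      "(B *\<^sub>v (T *\<^sub>v q')) \<bullet> (T *\<^sub>v q) = (B *\<^sub>v (T *\<^sub>v q)) \<bullet> (T *\<^sub>v q')"
      using A_pos B_pos c unfolding Sym_pos_def by (auto intro: sym_mat_scalar_prod_swap)
    then show ?thesis
      using sharp_scalar_prod_expand[OF s s'] sharp_scalar_prod_expand[OF s' s] x y c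
        skew[of q' p] skew[of p' q] by (simp add: theta_involution)
  qed
  have "?C $$ (i, j) = ?C $$ (j, i)" if "i < n" "j < n" for i j
    using that sharp_carrier swap[of "unit_vec n j" "unit_vec n i"] by simp
  then show ?thesis unfolding sym_mat_def using sharp_carrier by (auto intro!: eq_matI)
qed

lemma sharp_in_Sym_pos: "sharp d A B \<in> Sym_pos n"
  unfolding Sym_pos_iff
proof (intro conjI ballI impI sharp_sym_mat)
  fix z :: "complex vec" assume z: "z \<in> carrier_vec n" "z \<noteq> 0\<^sub>v n"
  obtain p q where s: "sharp_solution (T *\<^sub>v z) p q"
    by (rule sharp_solution_exists[OF theta_mult_vec_carrier[OF z(1)]])
  have "p \<noteq> 0\<^sub>v n \<or> q \<noteq> 0\<^sub>v n"
  proof (rule ccontr)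
    assume "\<not> ?thesis"
    then have "T *\<^sub>v z = 0\<^sub>v n" using s B_carrier unfolding sharp_solution_def by auto
    with z show False using theta_involution[of z d] by auto
  qed
  with s show "Re ((sharp d A B *\<^sub>v z) \<bullet>c z) > 0"
    using sharp_solution_energy_pos sharp_mult_vec z theta_involution by metis
qed

lemma sharp_theta_mult_vec:
  assumes "sharp_solution w p q"
  shows "(sharp d A B * T) *\<^sub>v w = q - p"
proof -
  have "w \<in> carrier_vec n" using assms unfolding sharp_solution_def by auto
  then show ?thesis
    using assoc_mult_mat_vec[OF sharp_carrier theta_mat_carrier] sharp_mult_vec[OF assms] by simp
qed

lemma cayley_rel_sharp:
  "cayley_rel n (sharp d A B * T) = cayley_rel n (B * T) O cayley_rel n (A * T)"
proof (intro equalityI subsetI)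
  fix xy assume "xy \<in> cayley_rel n (sharp d A B * T)"
  then obtain w where w: "w \<in> carrier_vec n"
    and xy: "xy = (w + (sharp d A B * T) *\<^sub>v w, w - (sharp d A B * T) *\<^sub>v w)"
    unfolding cayley_rel_def by blast
  obtain p q where s: "sharp_solution w p q" using w by (rule sharp_solution_exists)
  define u where "u = (B * T) *\<^sub>v q"
  define v where "v = (A * T) *\<^sub>v p"
  have c: "p \<in> carrier_vec n" "q \<in> carrier_vec n" "u \<in> carrier_vec n" "v \<in> carrier_vec n"
    and w_p: "w = p + u" and w_q: "w = q - v"
    using s unfolding sharp_solution_def u_def v_def by auto
  have "(fst xy, q - u) \<in> cayley_rel n (B * T)"
  proof -
    have "fst xy = q + u" "q - u = q - u"
      unfolding xy sharp_theta_mult_vec[OF s] using c w_p by (auto simp: vec_eq_iff)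
    then show ?thesis unfolding cayley_rel_def u_def using c by blast
  qed
  moreover have "(q - u, snd xy) \<in> cayley_rel n (A * T)"
  proof -
    have "q - u = p + v"
      using c w_p w_q by (force simp: vec_eq_iff eq_diff_eq diff_eq_eq algebra_simps)
    moreover have "snd xy = p - v"
      unfolding xy sharp_theta_mult_vec[OF s] using c w_q by (auto simp: vec_eq_iff)
    ultimately show ?thesis unfolding cayley_rel_def v_def using c by blast
  qed
  ultimately show "xy \<in> cayley_rel n (B * T) O cayley_rel n (A * T)"
    by (metis prod.collapse relcomp.relcompI)
next
  fix xy assume "xy \<in> cayley_rel n (B * T) O cayley_rel n (A * T)"
  then obtain m where "(fst xy, m) \<in> cayley_rel n (B * T)" "(m, snd xy) \<in> cayley_rel n (A * T)"
    by auto
  then obtain p q where c: "p \<in> carrier_vec n" "q \<in> carrier_vec n"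
    and x: "fst xy = q + (B * T) *\<^sub>v q" and m_q: "m = q - (B * T) *\<^sub>v q"
    and m_p: "m = p + (A * T) *\<^sub>v p" and y: "snd xy = p - (A * T) *\<^sub>v p"
    unfolding cayley_rel_def by blast
  define u where "u = (B * T) *\<^sub>v q"
  define v where "v = (A * T) *\<^sub>v p"
  define w where "w = p + u"
  have cuv: "u \<in> carrier_vec n" "v \<in> carrier_vec n" unfolding u_def v_def using c by auto
  have w_q: "w = q - v"
    using m_q m_p c cuv unfolding w_def u_def[symmetric] v_def[symmetric]
    by (force simp: vec_eq_iff eq_diff_eq diff_eq_eq algebra_simps)
  then have s: "sharp_solution w p q" unfolding sharp_solution_def w_def u_def v_def using c by auto
  have "w \<in> carrier_vec n" unfolding w_def using c cuv by auto
  moreover have "fst xy = w + (sharp d A B * T) *\<^sub>v w" "snd xy = w - (sharp d A B * T) *\<^sub>v w"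
    unfolding sharp_theta_mult_vec[OF s] x y u_def[symmetric] v_def[symmetric]
    using c cuv w_q unfolding w_def by (auto simp: vec_eq_iff)
  ultimately show "xy \<in> cayley_rel n (sharp d A B * T)"
    unfolding cayley_rel_def by (metis (mono_tags, lifting) mem_Collect_eq prod.collapse)
qed

end

lemma sharp_pos_pairI: "A \<in> Sym_pos (2*d) \<Longrightarrow> B \<in> Sym_pos (2*d) \<Longrightarrow> sharp_pos_pair d A B"
  unfolding sharp_pos_pair_def sharp_pair_def sharp_pos_pair_axioms_def Sym_pos_def sym_mat_def
  by auto

lemma sharp_assoc:
  assumes A: "A \<in> Sym_pos (2*d)" and B: "B \<in> Sym_pos (2*d)" and C: "C \<in> Sym_pos (2*d)"
  shows "sharp d (sharp d A B) C = sharp d A (sharp d B C)"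
proof -
  let ?R = "\<lambda>P. cayley_rel (2*d) (P * theta_mat d)"
  have AB: "sharp d A B \<in> Sym_pos (2*d)" and BC: "sharp d B C \<in> Sym_pos (2*d)"
    using sharp_pos_pair.sharp_in_Sym_pos sharp_pos_pairI A B C by blast+
  have "?R (sharp d (sharp d A B) C) = ?R C O (?R B O ?R A)"
    using sharp_pos_pair.cayley_rel_sharp sharp_pos_pairI A B C AB by metis
  also have "\<dots> = (?R C O ?R B) O ?R A" by (rule O_assoc[symmetric])
  also have "\<dots> = ?R (sharp d A (sharp d B C))"
    using sharp_pos_pair.cayley_rel_sharp sharp_pos_pairI A B C BC by metis
  finally show ?thesis
    using sharp_pos_pair.sharp_carrier sharp_pos_pairI A B C AB BC
    by (meson cayley_rel_inject mult_carrier_mat theta_mat_carrier theta_cancel_right)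
qed

lemma sharp_in_Sym_qnd:
  assumes "A \<in> Sym_qnd d" "B \<in> Sym_qnd d"
  shows "sharp d A B \<in> Sym_qnd d"
proof -
  have A: "A \<in> Sym_pos (2*d)" and B: "B \<in> Sym_pos (2*d)"
    and dA: "det (1\<^sub>m (2*d) + A * theta_mat d) \<noteq> 0" and dB: "det (1\<^sub>m (2*d) + B * theta_mat d) \<noteq> 0"
    using assms unfolding Sym_qnd_def by auto
  interpret sharp_pos_pair d A B by (rule sharp_pos_pairI[OF A B])
  have carriers: "P * T \<in> carrier_mat n n" if "P \<in> carrier_mat n n" for P
    using that by (meson mult_carrier_mat theta_mat_carrier)
  have "y = 0\<^sub>v n" if y: "(0\<^sub>v n, y) \<in> cayley_rel n (sharp d A B * T)" for y
  proof -
    obtain m where "(0\<^sub>v n, m) \<in> cayley_rel n (B * T)" "(m, y) \<in> cayley_rel n (A * T)"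
      using y unfolding cayley_rel_sharp by blast
    then show ?thesis
      using dA dB det_one_plus_nonzero_iff carriers A_carrier B_carrier by metis
  qed
  then have "det (1\<^sub>m n + sharp d A B * T) \<noteq> 0"
    using det_one_plus_nonzero_iff carriers sharp_carrier by blast
  then show ?thesis unfolding Sym_qnd_def using sharp_in_Sym_pos by blast
qed

theorem mainTheorem4:
  fixes d :: nat
  assumes "d \<ge> 1"
  shows "(\<forall>A \<in> Sym_pos (2*d). \<forall>B \<in> Sym_pos (2*d).
            sharp_well_defined d A B \<and> sharp d A B \<in> Sym_pos (2*d))
       \<and> (\<forall>A \<in> Sym_pos (2*d). \<forall>B \<in> Sym_pos (2*d). \<forall>C \<in> Sym_pos (2*d).
            sharp d (sharp d A B) C = sharp d A (sharp d B C))
       \<and> (\<forall>A \<in> Sym_qnd d. \<forall>B \<in> Sym_qnd d. sharp d A B \<in> Sym_qnd d)"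
  unfolding sharp_well_defined_def
  using sharp_pos_pair.M_invertible sharp_pos_pair.sharp_in_Sym_pos sharp_pos_pairI
    sharp_assoc sharp_in_Sym_qnd
  by blast

end
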